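(* Let $p$ be a prime and let $G$ be a finite $p$-group such that $Z(G)$ is not contained in $G'$ and $G$ has nilpotency class at least $3$. If $G$ has coclass $2$, then $G$ does not satisfy $Z(\mathrm{Inn}(G))=\mathrm{Aut}_c^{Z}(G)<\mathrm{Aut}_c(G)$ (i.e., it is not the case that $\mathrm{Aut}_c^{Z}(G)$ equals $Z(\mathrm{Inn}(G))$ and is a proper subgroup of $\mathrm{Aut}_c(G)$).
   Context: $G'$ is the commutator subgroup and $Z(G)$ the center of $G$. $\mathrm{Inn}(G)$ is the group of inner automorphisms of $G$. An automorphism $\alpha$ of $G$ is central if $x^{-1}\alpha(x)\in Z(G)$ for all $x\in G$ (equivalently, it commutes with all inner automorphisms); $\mathrm{Aut}_c(G)$ denotes the group of all central automorphisms of $G$, and $\mathrm{Aut}_c^{Z}(G)$ the subgroup of central automorphisms fixing every element of $Z(G)$. A group of order $p^n$ and nilpotency class $c$ has coclass $n-c$. *)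

theory Defs
  imports "HOL-Algebra.Algebra"
begin

definition center :: "('a, 'b) monoid_scheme \<Rightarrow> 'a set" where
  "center G = {z \<in> carrier G. \<forall>x \<in> carrier G. z \<otimes>\<^bsub>G\<^esub> x = x \<otimes>\<^bsub>G\<^esub> z}"

definition commutator_subgroup :: "('a, 'b) monoid_scheme \<Rightarrow> 'a set" where
  "commutator_subgroup G = derived G (carrier G)"

text \<open>Lower central series: gamma_1 = G (index 0 here), gamma_{i+1} = [G, gamma_i].\<close>
primrec lower_central :: "('a, 'b) monoid_scheme \<Rightarrow> nat \<Rightarrow> 'a set" where
  "lower_central G 0 = carrier G"
| "lower_central G (Suc n) = generate G
     {x \<otimes>\<^bsub>G\<^esub> y \<otimes>\<^bsub>G\<^esub> inv\<^bsub>G\<^esub> x \<otimes>\<^bsub>G\<^esub> inv\<^bsub>G\<^esub> y | x y. x \<in> carrier G \<and> y \<in> lower_central G n}"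

definition nilpotency_class :: "('a, 'b) monoid_scheme \<Rightarrow> nat" where
  "nilpotency_class G = (LEAST c. lower_central G c = {\<one>\<^bsub>G\<^esub>})"

definition inner_aut :: "('a, 'b) monoid_scheme \<Rightarrow> 'a \<Rightarrow> ('a \<Rightarrow> 'a)" where
  "inner_aut G g = (\<lambda>x \<in> carrier G. g \<otimes>\<^bsub>G\<^esub> x \<otimes>\<^bsub>G\<^esub> inv\<^bsub>G\<^esub> g)"

definition Inn :: "('a, 'b) monoid_scheme \<Rightarrow> ('a \<Rightarrow> 'a) set" where
  "Inn G = inner_aut G ` carrier G"

definition InnGroup :: "('a, 'b) monoid_scheme \<Rightarrow> ('a \<Rightarrow> 'a) monoid" where
  "InnGroup G = (AutoGroup G)\<lparr>carrier := Inn G\<rparr>"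

definition central_aut :: "('a, 'b) monoid_scheme \<Rightarrow> ('a \<Rightarrow> 'a) set" where
  "central_aut G = {\<alpha> \<in> auto G. \<forall>x \<in> carrier G. inv\<^bsub>G\<^esub> x \<otimes>\<^bsub>G\<^esub> \<alpha> x \<in> center G}"

definition central_aut_Z :: "('a, 'b) monoid_scheme \<Rightarrow> ('a \<Rightarrow> 'a) set" where
  "central_aut_Z G = {\<alpha> \<in> central_aut G. \<forall>z \<in> center G. \<alpha> z = z}"

end

theory Submission
  imports Defs
begin

text \<open>
  Let \<open>Z\<^sub>j\<close> be the upper central series and \<open>c\<close> the class, so that \<open>|G| = p^(c+2)\<close>.
  Each step \<open>Z\<^sub>j \<subset> Z\<^sub>j\<^sub>+\<^sub>1\<close> with \<open>j < c\<close> multiplies the order by at least \<open>p\<close>;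
  the quotient \<open>G/Z\<^sub>c\<^sub>-\<^sub>1\<close> is not cyclic, so it has order at least \<open>p^2\<close>; and
  \<open>|Z(G)| \<ge> p^2\<close> because \<open>Z(G) \<inter> G'\<close> is nontrivial but properly contained in \<open>Z(G)\<close>.
  The order of \<open>G\<close> leaves no room for more: \<open>G/Z\<^sub>c\<^sub>-\<^sub>1\<close> is elementary abelian of order
  \<open>p^2\<close>, and \<open>|Z\<^sub>2 : Z(G)| \<le> p\<close>.

  As \<open>Z(Inn(G))\<close> lies in the image of \<open>Z\<^sub>2\<close> under \<open>g \<mapsto> inner_aut G g\<close>, whose fibres are the
  cosets of \<open>Z(G)\<close>, it has at most \<open>p\<close> elements. On the other hand, for \<open>w \<in> Z(G)\<close> of
  order \<open>p\<close>, each of the \<open>p^2\<close> homomorphisms \<open>f : G/Z\<^sub>c\<^sub>-\<^sub>1 \<rightarrow> \<langle>w\<rangle>\<close> gives a central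
  automorphism \<open>x \<mapsto> x f(x)\<close> fixing \<open>Z(G) \<subseteq> Z\<^sub>c\<^sub>-\<^sub>1\<close> pointwise, so \<open>Aut\<^sub>c\<^sup>Z(G)\<close> has at
  least \<open>p^2\<close> elements and cannot equal \<open>Z(Inn(G))\<close>.
\<close>

section \<open>Elementary group theory\<close>

context group begin

lemma mult_inv_cancel_left [simp]:
  "x \<in> carrier G \<Longrightarrow> z \<in> carrier G \<Longrightarrow> x \<otimes> (inv x \<otimes> z) = z"
  by (simp add: m_assoc [symmetric])

lemma inv_mult_cancel_left [simp]:
  "x \<in> carrier G \<Longrightarrow> z \<in> carrier G \<Longrightarrow> inv x \<otimes> (x \<otimes> z) = z"
  by (simp add: m_assoc [symmetric])

lemma subgroup_nat_pow_closed:
  "subgroup H G \<Longrightarrow> h \<in> H \<Longrightarrow> h [^] (k::nat) \<in> H"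
  using subgroup_int_pow_closed[of H h "int k"] by (simp add: int_pow_int)

lemma nat_pow_mod_eq:
  assumes "x \<in> carrier G" "x [^] p = \<one>"
  shows "x [^] (i mod p) = x [^] (i::nat)"
proof -
  have "x [^] i = (x [^] p) [^] (i div p) \<otimes> x [^] (i mod p)"
    using assms(1) by (simp add: nat_pow_pow nat_pow_mult)
  then show ?thesis
    using assms by simp
qed

lemma pow_mem_generate: "x \<in> carrier G \<Longrightarrow> x [^] (k::nat) \<in> generate G {x}"
  using subgroup_nat_pow_closed[OF generate_is_subgroup generate.incl[of x "{x}"]] by simp

lemma rcos_eq_iff:
  assumes "subgroup H G" "x \<in> carrier G" "y \<in> carrier G"
  shows "H #> x = H #> y \<longleftrightarrow> x \<otimes> inv y \<in> H"
  using assms subgroup.rcos_module[OF assms(1) is_group] rcos_self repr_independence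
  by metis

lemma ord_eq_prime:
  assumes "Factorial_Ring.prime p" "x \<in> carrier G" "x \<noteq> \<one>" "x [^] p = \<one>"
  shows "ord x = p"
proof -
  have "ord x dvd p"
    using pow_eq_id assms(2,4) by blast
  moreover have "ord x \<noteq> 1"
    using ord_eq_1 assms(2,3) by blast
  ultimately show ?thesis
    using assms(1) by (metis prime_nat_iff)
qed

lemma generate_Int_generate_eq_one:
  assumes fin: "finite (carrier G)" and prime: "Factorial_Ring.prime (ord b)"
    and a: "a \<in> carrier G" and b: "b \<in> carrier G" and b_notin: "b \<notin> generate G {a}"
  shows "generate G {a} \<inter> generate G {b} = {\<one>}"
proof -
  have "y = \<one>" if ya: "y \<in> generate G {a}" and yb: "y \<in> generate G {b}" for y
  proof (rule ccontr)
    assume y1: "y \<noteq> \<one>"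
    obtain k :: nat where k: "y = b [^] k"
      using yb generate_pow_on_finite_carrier[OF fin b] by blast
    have "y [^] ord b = (b [^] ord b) [^] k"
      unfolding k using b by (simp only: nat_pow_pow mult.commute)
    then have "y [^] ord b = \<one>"
      using b by simp
    then have "ord y = ord b"
      using ord_eq_prime[OF prime] y1 b k by simp
    moreover have "generate G {y} \<subseteq> generate G {b}"
      using yb by (intro generate_subgroup_incl generate_is_subgroup) (auto simp: b)
    moreover have "finite (generate G {b})"
      using fin generate_incl[of "{b}"] b finite_subset by blast
    moreover have "card (generate G {y}) = card (generate G {b})"
      using generate_pow_card[of y] generate_pow_card[OF b] \<open>ord y = ord b\<close> b k by simp
    ultimately have "generate G {y} = generate G {b}"
      using card_subset_eq by blast
    moreover have "generate G {y} \<subseteq> generate G {a}"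
      using ya by (intro generate_subgroup_incl generate_is_subgroup) (auto simp: a)
    ultimately show False
      using b_notin generate.incl[of b "{b}"] by blast
  qed
  then show ?thesis
    using generate.one by blast
qed

lemma inj_on_pow_mult_pow:
  assumes a: "a \<in> carrier G" and b: "b \<in> carrier G"
    and disjoint: "generate G {a} \<inter> generate G {b} \<subseteq> {\<one>}"
  shows "inj_on (\<lambda>(i, j). a [^] i \<otimes> b [^] j) ({..<ord a} \<times> {..<ord b})"
proof (rule inj_onI, clarsimp)
  fix i j k l :: nat
  assume lt: "i < ord a" "j < ord b" "k < ord a" "l < ord b"
    and eq: "a [^] i \<otimes> b [^] j = a [^] k \<otimes> b [^] l"
  interpret D: group_disjoint_sum G "generate G {a}" "generate G {b}"
    using a b by (simp add: group_disjoint_sum_def is_group generate_is_subgroup)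
  have cancel: "\<forall>x \<in> generate G {a}. \<forall>y \<in> generate G {b}. \<forall>x' \<in> generate G {a}.
      \<forall>y' \<in> generate G {b}. x \<otimes> y = x' \<otimes> y' \<longrightarrow> x = x' \<and> y = y'"
    using D.cancel disjoint by blast
  have "a [^] i = a [^] k \<and> b [^] j = b [^] l"
    using cancel[rule_format, OF pow_mem_generate pow_mem_generate pow_mem_generate
        pow_mem_generate eq] a b by simp
  moreover have "i \<in> {0..ord a - 1}" "k \<in> {0..ord a - 1}" "j \<in> {0..ord b - 1}" "l \<in> {0..ord b - 1}"
    using lt by auto
  ultimately show "i = k \<and> j = l"
    using inj_onD[OF ord_inj[OF a]] inj_onD[OF ord_inj[OF b]] by blast
qed

lemma hom_mult_central:
  assumes "\<phi> \<in> hom H G" "\<psi> \<in> hom H G" "\<And>x. x \<in> carrier H \<Longrightarrow> \<psi> x \<in> center G"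
  shows "(\<lambda>x. \<phi> x \<otimes> \<psi> x) \<in> hom H G"
proof (rule homI)
  show "\<phi> x \<otimes> \<psi> x \<in> carrier G" if "x \<in> carrier H" for x
    using hom_in_carrier[OF assms(1) that] hom_in_carrier[OF assms(2) that] by simp
  fix x y assume x: "x \<in> carrier H" and y: "y \<in> carrier H"
  have central: "v \<otimes> \<psi> x = \<psi> x \<otimes> v" if "v \<in> carrier G" for v
    using assms(3)[OF x] that unfolding center_def by simp
  have carrier: "\<phi> x \<in> carrier G" "\<phi> y \<in> carrier G" "\<psi> x \<in> carrier G" "\<psi> y \<in> carrier G"
    using x y hom_in_carrier[OF assms(1)] hom_in_carrier[OF assms(2)] by auto
  have "\<phi> (x \<otimes>\<^bsub>H\<^esub> y) \<otimes> \<psi> (x \<otimes>\<^bsub>H\<^esub> y) = \<phi> x \<otimes> (\<phi> y \<otimes> \<psi> x) \<otimes> \<psi> y"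
    using x y assms(1,2) carrier by (simp add: hom_mult m_assoc)
  also have "\<dots> = \<phi> x \<otimes> (\<psi> x \<otimes> \<phi> y) \<otimes> \<psi> y"
    using central[OF carrier(2)] by simp
  also have "\<dots> = \<phi> x \<otimes> \<psi> x \<otimes> (\<phi> y \<otimes> \<psi> y)"
    using carrier by (simp add: m_assoc)
  finally show "\<phi> (x \<otimes>\<^bsub>H\<^esub> y) \<otimes> \<psi> (x \<otimes>\<^bsub>H\<^esub> y) = \<phi> x \<otimes> \<psi> x \<otimes> (\<phi> y \<otimes> \<psi> y)" .
qed

lemma int_pow_hom_integer_mod_group:
  assumes "w \<in> carrier G" "w [^] p = \<one>"
  shows "(\<lambda>i::int. w [^] i) \<in> hom (integer_mod_group p) G"
proof (rule homI)
  fix i j :: int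
  have "int (ord w) dvd int p"
    using pow_eq_id assms by simp
  moreover have "int p dvd (i + j) - (i + j) mod int p"
    by (simp add: minus_mod_eq_mult_div)
  ultimately have "int (ord w) dvd (i + j) - (i + j) mod int p"
    by (rule dvd_trans)
  then have "w [^] ((i + j) mod int p) = w [^] (i + j)"
    using int_pow_eq[OF assms(1)] by simp
  then show "w [^] (i \<otimes>\<^bsub>integer_mod_group p\<^esub> j) = w [^] i \<otimes> w [^] j"
    using assms(1) by (simp add: int_pow_mult)
qed (use assms in simp)

lemma finite_central_aut_Z:
  assumes "finite (carrier G)"
  shows "finite (central_aut_Z G)"
proof -
  have "f \<in> carrier G \<rightarrow>\<^sub>E carrier G" if "f \<in> central_aut_Z G" for f
  proof -
    have "f \<in> extensional (carrier G)" "f \<in> carrier G \<rightarrow> carrier G"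
      using that unfolding central_aut_Z_def central_aut_def auto_def Bij_def hom_def by auto
    then show ?thesis
      by (simp add: PiE_def)
  qed
  then have "central_aut_Z G \<subseteq> carrier G \<rightarrow>\<^sub>E carrier G"
    by blast
  moreover have "finite (carrier G \<rightarrow>\<^sub>E carrier G)"
    using assms by (intro finite_PiE)
  ultimately show ?thesis
    by (rule finite_subset)
qed

end

section \<open>Upper and lower central series\<close>

primrec upper_central :: "('a, 'b) monoid_scheme \<Rightarrow> nat \<Rightarrow> 'a set" where
  "upper_central G 0 = {\<one>\<^bsub>G\<^esub>}"
| "upper_central G (Suc j) = {y \<in> carrier G. \<forall>x \<in> carrier G.
     x \<otimes>\<^bsub>G\<^esub> y \<otimes>\<^bsub>G\<^esub> inv\<^bsub>G\<^esub> x \<otimes>\<^bsub>G\<^esub> inv\<^bsub>G\<^esub> y \<in> upper_central G j}"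

text \<open>Unfolding the successor equation eagerly blows up simplifier goals about
  cosets, so it is used only explicitly.\<close>

declare upper_central.simps(2) [simp del]

context group begin

lemma commutator_preimage_subgroup:
  assumes "N \<lhd> G"
  shows "subgroup {y \<in> carrier G. \<forall>x \<in> carrier G. x \<otimes> y \<otimes> inv x \<otimes> inv y \<in> N} G"
    (is "subgroup ?U G")
proof -
  interpret N: normal N G by (rule assms)
  have mult: "a \<otimes> b \<in> ?U" if a: "a \<in> ?U" and b: "b \<in> ?U" for a b
  proof -
    have "x \<otimes> (a \<otimes> b) \<otimes> inv x \<otimes> inv (a \<otimes> b) \<in> N" if x: "x \<in> carrier G" for x
    proof -
      have e: "x \<otimes> (a \<otimes> b) \<otimes> inv x \<otimes> inv (a \<otimes> b) =
          (x \<otimes> a \<otimes> inv x \<otimes> inv a) \<otimes> (a \<otimes> (x \<otimes> b \<otimes> inv x \<otimes> inv b) \<otimes> inv a)"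
        using x a b by (simp add: m_assoc inv_mult_group)
      have "x \<otimes> a \<otimes> inv x \<otimes> inv a \<in> N"
        using x a by auto
      moreover have "a \<otimes> (x \<otimes> b \<otimes> inv x \<otimes> inv b) \<otimes> inv a \<in> N"
        using x a b by (intro N.inv_op_closed2) auto
      ultimately show ?thesis
        unfolding e by (rule N.m_closed)
    qed
    then show ?thesis using a b by auto
  qed
  have inv: "inv a \<in> ?U" if a: "a \<in> ?U" for a
  proof -
    have "x \<otimes> inv a \<otimes> inv x \<otimes> inv (inv a) \<in> N" if x: "x \<in> carrier G" for x
    proof -
      have e: "x \<otimes> inv a \<otimes> inv x \<otimes> inv (inv a) = inv a \<otimes> inv (x \<otimes> a \<otimes> inv x \<otimes> inv a) \<otimes> inv (inv a)"
        using x a by (simp add: m_assoc inv_mult_group)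
      show ?thesis
        unfolding e using x a by (intro N.inv_op_closed2) auto
    qed
    then show ?thesis using a by auto
  qed
  show ?thesis
    by (rule subgroupI) (use mult inv in auto)
qed

lemma commutator_preimage_normal:
  assumes "N \<lhd> G"
  shows "{y \<in> carrier G. \<forall>x \<in> carrier G. x \<otimes> y \<otimes> inv x \<otimes> inv y \<in> N} \<lhd> G"
    (is "?U \<lhd> G")
proof -
  interpret N: normal N G by (rule assms)
  have "g \<otimes> h \<otimes> inv g \<in> ?U" if g: "g \<in> carrier G" and h: "h \<in> ?U" for g h
  proof -
    have "x \<otimes> (g \<otimes> h \<otimes> inv g) \<otimes> inv x \<otimes> inv (g \<otimes> h \<otimes> inv g) \<in> N" if x: "x \<in> carrier G" for x
    proof -
      have e: "x \<otimes> (g \<otimes> h \<otimes> inv g) \<otimes> inv x \<otimes> inv (g \<otimes> h \<otimes> inv g) =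
          g \<otimes> ((inv g \<otimes> x \<otimes> g) \<otimes> h \<otimes> inv (inv g \<otimes> x \<otimes> g) \<otimes> inv h) \<otimes> inv g"
        using x g h by (simp add: m_assoc inv_mult_group)
      show ?thesis
        unfolding e using x g h by (intro N.inv_op_closed2) auto
    qed
    then show ?thesis using g h by auto
  qed
  then show ?thesis
    using commutator_preimage_subgroup[OF assms] unfolding normal_inv_iff by blast
qed

lemma upper_central_normal: "upper_central G j \<lhd> G"
proof (induction j)
  case 0
  then show ?case
    using one_is_normal by simp
next
  case (Suc j)
  then show ?case
    unfolding upper_central.simps(2) by (rule commutator_preimage_normal)
qed

lemma upper_central_subgroup: "subgroup (upper_central G j) G"
  using upper_central_normal normal_imp_subgroup by blast

lemma upper_central_subset: "upper_central G j \<subseteq> carrier G"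
  using upper_central_subgroup subgroup.subset by blast

lemma upper_central_mono: "i \<le> j \<Longrightarrow> upper_central G i \<subseteq> upper_central G j"
proof (rule lift_Suc_mono_le[where f = "upper_central G"])
  show "upper_central G k \<subseteq> upper_central G (Suc k)" for k
  proof
    fix y assume y: "y \<in> upper_central G k"
    interpret N: normal "upper_central G k" G by (rule upper_central_normal)
    have "x \<otimes> y \<otimes> inv x \<otimes> inv y \<in> upper_central G k" if "x \<in> carrier G" for x
      using that y by (intro N.m_closed N.inv_op_closed2) auto
    then show "y \<in> upper_central G (Suc k)"
      using y upper_central_subset by (auto simp: upper_central.simps)
  qed
qed

lemma upper_central_one: "upper_central G 1 = center G"
proof -
  have "z \<otimes> x = x \<otimes> z \<longleftrightarrow> x \<otimes> z \<otimes> inv x \<otimes> inv z = \<one>"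
    if "z \<in> carrier G" "x \<in> carrier G" for x z
    using that by (metis inv_closed m_closed r_inv inv_solve_right m_assoc)
  then show ?thesis
    unfolding center_def by (auto simp: upper_central.simps)
qed

lemma center_subset_upper_central: "0 < j \<Longrightarrow> center G \<subseteq> upper_central G j"
  using upper_central_mono[of 1 j] unfolding upper_central_one by simp

lemma center_subgroup: "subgroup (center G) G"
  using upper_central_subgroup[of 1] unfolding upper_central_one .

lemma upper_central_Suc_iff_central_coset:
  assumes "y \<in> carrier G"
  shows "y \<in> upper_central G (Suc j) \<longleftrightarrow>
    (\<forall>x \<in> carrier G. (upper_central G j #> x) <#> (upper_central G j #> y) =
                     (upper_central G j #> y) <#> (upper_central G j #> x))"
proof -
  interpret N: normal "upper_central G j" G by (rule upper_central_normal)
  have "(upper_central G j #> x) <#> (upper_central G j #> y) =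
        (upper_central G j #> y) <#> (upper_central G j #> x) \<longleftrightarrow>
      x \<otimes> y \<otimes> inv x \<otimes> inv y \<in> upper_central G j" if "x \<in> carrier G" for x
    using that assms by (simp add: N.rcos_sum rcos_eq_iff[OF N.subgroup_axioms] m_assoc inv_mult_group)
  then show ?thesis
    using assms by (auto simp: upper_central.simps)
qed

lemma upper_central_Suc_eq_carrier_iff:
  "upper_central G (Suc j) = carrier G \<longleftrightarrow> comm_group (G Mod upper_central G j)"
proof
  interpret N: normal "upper_central G j" G by (rule upper_central_normal)
  interpret Q: group "G Mod upper_central G j" by (rule N.factorgroup_is_group)
  show "comm_group (G Mod upper_central G j)" if "upper_central G (Suc j) = carrier G"
  proof (rule Q.group_comm_groupI)
    fix U V assume "U \<in> carrier (G Mod upper_central G j)" "V \<in> carrier (G Mod upper_central G j)"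
    then obtain x y where "x \<in> carrier G" "y \<in> carrier G"
      and "U = upper_central G j #> x" "V = upper_central G j #> y"
      unfolding carrier_FactGroup by auto
    then show "U \<otimes>\<^bsub>G Mod upper_central G j\<^esub> V = V \<otimes>\<^bsub>G Mod upper_central G j\<^esub> U"
      using that upper_central_Suc_iff_central_coset[of y j] by auto
  qed
  show "upper_central G (Suc j) = carrier G" if "comm_group (G Mod upper_central G j)"
  proof -
    interpret Q: comm_group "G Mod upper_central G j" by (rule that)
    have "y \<in> upper_central G (Suc j)" if "y \<in> carrier G" for y
      using that Q.m_comm upper_central_Suc_iff_central_coset[OF that]
      by (simp add: carrier_FactGroup)
    then show ?thesis
      using upper_central_subset by blast
  qed
qed

lemma comm_group_of_cyclic_mod_central:
  assumes "x \<in> carrier G" "C \<subseteq> center G"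
    and "\<And>y. y \<in> carrier G \<Longrightarrow> \<exists>c \<in> C. \<exists>k::nat. y = c \<otimes> x [^] k"
  shows "comm_group G"
proof (rule group_comm_groupI)
  have central: "v \<otimes> c = c \<otimes> v" if "c \<in> C" "v \<in> carrier G" for c v
    using that assms(2) unfolding center_def by auto
  have C_carrier: "c \<in> carrier G" if "c \<in> C" for c
    using that assms(2) unfolding center_def by auto
  have normal_form: "(c \<otimes> x [^] k) \<otimes> (d \<otimes> x [^] l) = (c \<otimes> d) \<otimes> x [^] (k + l)"
    if c: "c \<in> C" and d: "d \<in> C" for c d and k l :: nat
  proof -
    have "c \<in> carrier G" "d \<in> carrier G"
      using c d C_carrier by auto
    then have "(c \<otimes> x [^] k) \<otimes> (d \<otimes> x [^] l) = c \<otimes> ((x [^] k \<otimes> d) \<otimes> x [^] l)"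
      using assms(1) by (simp add: m_assoc)
    also have "\<dots> = c \<otimes> ((d \<otimes> x [^] k) \<otimes> x [^] l)"
      using central[OF d] assms(1) by simp
    also have "\<dots> = (c \<otimes> d) \<otimes> x [^] (k + l)"
      using \<open>c \<in> carrier G\<close> \<open>d \<in> carrier G\<close> assms(1) by (simp add: m_assoc nat_pow_mult)
    finally show ?thesis .
  qed
  fix y z assume "y \<in> carrier G" "z \<in> carrier G"
  then obtain c d and k l :: nat where "c \<in> C" "d \<in> C" "y = c \<otimes> x [^] k" "z = d \<otimes> x [^] l"
    using assms(3) by meson
  then show "y \<otimes> z = z \<otimes> y"
    using normal_form central C_carrier by (simp add: add.commute)
qed

lemma cyclic_FactGroup_decompose:
  assumes fin: "finite (carrier G)" and N: "N \<lhd> G" and x: "x \<in> carrier G"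
    and gen: "generate (G Mod N) {N #> x} = carrier (G Mod N)" and y: "y \<in> carrier G"
  shows "\<exists>u \<in> N. \<exists>k::nat. y = u \<otimes> x [^] k"
proof -
  interpret N: normal N G by (rule N)
  interpret Q: group "G Mod N" by (rule N.factorgroup_is_group)
  have "finite (carrier (G Mod N))" "N #> x \<in> carrier (G Mod N)"
    using fin x unfolding carrier_FactGroup by auto
  moreover have "N #> y \<in> generate (G Mod N) {N #> x}"
    using y gen unfolding carrier_FactGroup by auto
  ultimately obtain k :: nat where "N #> y = (N #> x) [^]\<^bsub>G Mod N\<^esub> k"
    using Q.generate_pow_on_finite_carrier by blast
  then have "N #> y = N #> x [^] k"
    by (simp only: N.FactGroup_pow[OF x])
  then have "y \<otimes> inv (x [^] k) \<in> N"
    using rcos_eq_iff[OF N.subgroup_axioms y nat_pow_closed[OF x]] by blast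
  moreover have "y = (y \<otimes> inv (x [^] k)) \<otimes> x [^] k"
    using x y by (simp add: m_assoc)
  ultimately show ?thesis
    by blast
qed

text \<open>A relative form of "\<open>G/Z(G)\<close> cyclic implies \<open>G\<close> abelian".\<close>

lemma upper_central_Suc_eq_carrier_of_cyclic_quotient:
  assumes fin: "finite (carrier G)" and x: "x \<in> carrier G"
    and gen: "generate (G Mod upper_central G (Suc j)) {upper_central G (Suc j) #> x} =
      carrier (G Mod upper_central G (Suc j))"
  shows "upper_central G (Suc j) = carrier G"
proof -
  let ?N = "upper_central G j" and ?M = "upper_central G (Suc j)"
  interpret N: normal ?N G by (rule upper_central_normal)
  have "comm_group (G Mod ?N)"
  proof (rule group.comm_group_of_cyclic_mod_central[OF N.factorgroup_is_group])
    show "?N #> x \<in> carrier (G Mod ?N)"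
      using x unfolding carrier_FactGroup by auto
    show "(#>) ?N ` ?M \<subseteq> center (G Mod ?N)"
    proof
      fix U assume "U \<in> (#>) ?N ` ?M"
      then obtain u where u: "u \<in> ?M" "U = ?N #> u"
        by blast
      moreover have "u \<in> carrier G"
        using u(1) upper_central_subset by blast
      ultimately show "U \<in> center (G Mod ?N)"
        using upper_central_Suc_iff_central_coset unfolding center_def carrier_FactGroup by auto
    qed
    fix U assume "U \<in> carrier (G Mod ?N)"
    then obtain y where y: "y \<in> carrier G" "U = ?N #> y"
      unfolding carrier_FactGroup by auto
    then obtain u and k :: nat where "u \<in> ?M" "y = u \<otimes> x [^] k"
      using cyclic_FactGroup_decompose[OF fin upper_central_normal x gen] by blast
    moreover have "u \<in> carrier G"
      using \<open>u \<in> ?M\<close> upper_central_subset by blast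
    ultimately have "U = (?N #> u) \<otimes>\<^bsub>G Mod ?N\<^esub> (?N #> x) [^]\<^bsub>G Mod ?N\<^esub> k"
      using x y by (simp add: N.FactGroup_pow N.rcos_sum)
    then show "\<exists>C \<in> (#>) ?N ` ?M. \<exists>k::nat. U = C \<otimes>\<^bsub>G Mod ?N\<^esub> (?N #> x) [^]\<^bsub>G Mod ?N\<^esub> k"
      using \<open>u \<in> ?M\<close> by blast
  qed
  then show ?thesis
    using upper_central_Suc_eq_carrier_iff by blast
qed

lemma lower_central_subset: "lower_central G i \<subseteq> carrier G"
proof (induction i)
  case (Suc i)
  then show ?case
    unfolding lower_central.simps by (intro generate_incl) auto
qed simp

lemma lower_central_subgroup: "subgroup (lower_central G i) G"
proof (cases i)
  case (Suc k)
  then show ?thesis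
    unfolding Suc lower_central.simps using lower_central_subset[of k]
    by (intro generate_is_subgroup) auto
qed (simp add: subgroup_self)

lemma lower_central_one: "lower_central G 1 = commutator_subgroup G"
  unfolding commutator_subgroup_def derived_def by (simp add: One_nat_def) (rule arg_cong[where f = "generate G"], blast)

lemma lower_central_Suc_subset_commutator_subgroup:
  "lower_central G (Suc k) \<subseteq> commutator_subgroup G"
  unfolding commutator_subgroup_def derived_def lower_central.simps
  using lower_central_subset[of k] by (intro mono_generate) blast

lemma lower_central_subset_upper_central_diff:
  assumes "upper_central G k = carrier G" "i \<le> k"
  shows "lower_central G i \<subseteq> upper_central G (k - i)"
  using assms(2)
proof (induction i)
  case (Suc i)
  then have "lower_central G i \<subseteq> upper_central G (Suc (k - Suc i))"
    by (simp add: Suc_diff_Suc)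
  then show ?case
    unfolding lower_central.simps
    by (intro generate_subgroup_incl[OF _ upper_central_subgroup]) (auto simp: upper_central.simps)
qed (simp add: assms(1))

lemma lower_central_diff_subset_upper_central:
  assumes "lower_central G c = {\<one>}" "i \<le> c"
  shows "lower_central G (c - i) \<subseteq> upper_central G i"
  using assms(2)
proof (induction i)
  case (Suc i)
  show ?case
  proof
    fix y assume y: "y \<in> lower_central G (c - Suc i)"
    have "x \<otimes> y \<otimes> inv x \<otimes> inv y \<in> lower_central G (Suc (c - Suc i))" if "x \<in> carrier G" for x
      unfolding lower_central.simps using that y by (intro generate.incl) blast
    moreover have "Suc (c - Suc i) = c - i"
      using Suc.prems by simp
    ultimately show "y \<in> upper_central G (Suc i)"
      using Suc y lower_central_subset by (auto simp: upper_central.simps)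
  qed
qed (simp add: assms(1))

lemma lower_central_pred_nilpotency_class:
  assumes "0 < nilpotency_class G"
  shows "lower_central G (nilpotency_class G - 1) \<noteq> {\<one>}"
  using assms not_less_Least[of "nilpotency_class G - 1" "\<lambda>c. lower_central G c = {\<one>}"]
  unfolding nilpotency_class_def by simp

lemma upper_central_pred_nilpotency_class:
  assumes "0 < nilpotency_class G"
  shows "upper_central G (nilpotency_class G - 1) \<noteq> carrier G"
proof
  assume "upper_central G (nilpotency_class G - 1) = carrier G"
  from lower_central_subset_upper_central_diff[OF this, of "nilpotency_class G - 1"]
  have "lower_central G (nilpotency_class G - 1) \<subseteq> {\<one>}"
    by simp
  then show False
    using lower_central_pred_nilpotency_class[OF assms]
      subgroup.one_closed[OF lower_central_subgroup, of "nilpotency_class G - 1"]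
    by auto
qed

lemma upper_central_ne_carrier:
  assumes "j < nilpotency_class G"
  shows "upper_central G j \<noteq> carrier G"
proof
  assume "upper_central G j = carrier G"
  then have "carrier G \<subseteq> upper_central G (nilpotency_class G - 1)"
    using upper_central_mono[of j "nilpotency_class G - 1"] assms by simp
  then show False
    using upper_central_pred_nilpotency_class upper_central_subset assms by (simp add: subset_antisym)
qed

lemma FactGroup_pred_nilpotency_class_not_cyclic:
  assumes "finite (carrier G)" "2 \<le> nilpotency_class G"
    and "U \<in> carrier (G Mod upper_central G (nilpotency_class G - 1))"
  shows "generate (G Mod upper_central G (nilpotency_class G - 1)) {U} \<noteq>
    carrier (G Mod upper_central G (nilpotency_class G - 1))"
proof
  assume gen: "generate (G Mod upper_central G (nilpotency_class G - 1)) {U} =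
    carrier (G Mod upper_central G (nilpotency_class G - 1))"
  obtain x where x: "x \<in> carrier G" "U = upper_central G (nilpotency_class G - 1) #> x"
    using assms(3) unfolding carrier_FactGroup by auto
  let ?j = "nilpotency_class G - 2"
  have j: "Suc ?j = nilpotency_class G - 1"
    using assms(2) by simp
  have "upper_central G (Suc ?j) = carrier G"
    using upper_central_Suc_eq_carrier_of_cyclic_quotient[OF assms(1) x(1), of ?j] gen x(2)
    unfolding j by simp
  then show False
    using upper_central_pred_nilpotency_class assms(2) unfolding j by simp
qed

end

section \<open>Finite p-groups\<close>

locale p_group = group +
  fixes p n :: nat
  assumes prime: "Factorial_Ring.prime p"
    and finite_carrier: "finite (carrier G)"
    and order_eq: "order G = p ^ n"
begin

lemma one_less_p: "1 < p"
  using prime prime_gt_1_nat by blast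

lemma card_subgroup: "subgroup H G \<Longrightarrow> \<exists>i. card H = p ^ i"
  using lagrange order_eq divides_primepow_nat[OF prime]
  by (metis dvd_triv_right)

lemma p_group_FactGroup:
  assumes "N \<lhd> G"
  shows "\<exists>m. p_group (G Mod N) p m \<and> p ^ m * card N = p ^ n"
proof -
  interpret N: normal N G by (rule assms)
  have lagrange: "card (carrier (G Mod N)) * card N = p ^ n"
    using lagrange[OF N.subgroup_axioms] order_eq unfolding FactGroup_def by simp
  then obtain m where "card (carrier (G Mod N)) = p ^ m"
    using divides_primepow_nat[OF prime] by (metis dvd_triv_left)
  moreover have "finite (carrier (G Mod N))"
    using finite_carrier unfolding carrier_FactGroup by simp
  ultimately show ?thesis
    using lagrange N.factorgroup_is_group prime
    by (intro exI[of _ m]) (simp add: p_group_def p_group_axioms_def order_def)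
qed

lemma p_dvd_card_conjugation_orbit:
  assumes x: "x \<in> carrier G" and noncentral: "x \<notin> center G"
  shows "p dvd card (orbit G (\<lambda>g. \<lambda>h \<in> carrier G. g \<otimes> h \<otimes> inv g) x)"
proof -
  define \<phi> where "\<phi> = (\<lambda>g. \<lambda>h \<in> carrier G. g \<otimes> h \<otimes> inv g)"
  interpret A: group_action G "carrier G" \<phi>
    unfolding \<phi>_def by (rule action_by_conjugation)
  obtain g where g: "g \<in> carrier G" "g \<otimes> x \<noteq> x \<otimes> g"
    using x noncentral unfolding center_def by auto
  have "x \<in> orbit G \<phi> x"
    unfolding orbit_def \<phi>_def using x by (auto intro!: exI[of _ \<one>])
  moreover have "g \<otimes> x \<otimes> inv g \<in> orbit G \<phi> x"
    unfolding orbit_def \<phi>_def using x g by auto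
  moreover have "g \<otimes> x \<otimes> inv g \<noteq> x"
  proof
    assume "g \<otimes> x \<otimes> inv g = x"
    then have "g \<otimes> x \<otimes> inv g \<otimes> g = x \<otimes> g"
      by simp
    then show False
      using g x by (simp add: m_assoc)
  qed
  ultimately have "card (orbit G \<phi> x) \<noteq> 1"
    by (metis card_1_singletonE singletonD)
  moreover have "card (orbit G \<phi> x) dvd p ^ n"
    using A.orbit_stabilizer_theorem[OF x] order_eq by (metis dvd_triv_left)
  ultimately obtain i where "card (orbit G \<phi> x) = p ^ i" "i \<noteq> 0"
    using divides_primepow_nat[OF prime] by (metis power_0)
  then show ?thesis
    unfolding \<phi>_def[symmetric] by (simp add: dvd_power)
qed

text \<open>The class equation.\<close>

lemma center_nontrivial:
  assumes "0 < n"
  shows "\<exists>z \<in> center G. z \<noteq> \<one>"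
proof (rule ccontr)
  assume trivial: "\<not> ?thesis"
  define \<phi> where "\<phi> = (\<lambda>g. \<lambda>h \<in> carrier G. g \<otimes> h \<otimes> inv g)"
  interpret A: group_action G "carrier G" \<phi>
    unfolding \<phi>_def by (rule action_by_conjugation)
  have orbit_one: "orbit G \<phi> \<one> = {\<one>}"
    unfolding orbit_def \<phi>_def by (auto intro!: exI[of _ \<one>])
  have p_dvd: "p dvd card orb" if orb: "orb \<in> orbits G (carrier G) \<phi> - {{\<one>}}" for orb
  proof -
    obtain x where x: "x \<in> carrier G" "orb = orbit G \<phi> x"
      using orb unfolding orbits_def by auto
    have "x \<noteq> \<one>"
      using orb x orbit_one by auto
    then have "x \<notin> center G"
      using trivial by auto
    then show ?thesis
      using p_dvd_card_conjugation_orbit x unfolding \<phi>_def by simp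
  qed
  have "orbit G \<phi> x \<subseteq> carrier G" if "x \<in> carrier G" for x
    using that unfolding orbit_def \<phi>_def by auto
  then have "orbits G (carrier G) \<phi> \<subseteq> Pow (carrier G)"
    unfolding orbits_def by auto
  then have finite_orbits: "finite (orbits G (carrier G) \<phi>)"
    using finite_carrier by (meson finite_Pow_iff finite_subset)
  have "{\<one>} \<in> orbits G (carrier G) \<phi>"
    unfolding orbits_def using orbit_one by force
  moreover have "(\<Sum>orb \<in> orbits G (carrier G) \<phi>. card orb) = p ^ n"
    using A.disjoint_sum[OF finite_carrier, of "\<lambda>_. 1::nat"] order_eq
    by (simp add: card_eq_sum[symmetric] order_def)
  ultimately have "1 + (\<Sum>orb \<in> orbits G (carrier G) \<phi> - {{\<one>}}. card orb) = p ^ n"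
    using finite_orbits by (simp add: sum.remove)
  moreover have "p dvd (\<Sum>orb \<in> orbits G (carrier G) \<phi> - {{\<one>}}. card orb)"
    using p_dvd by (rule dvd_sum)
  moreover have "p dvd p ^ n"
    using assms by (simp add: dvd_power)
  ultimately have "p dvd 1"
    by (metis dvd_add_left_iff)
  then show False
    using prime by simp
qed

lemma p_mult_card_le_of_psubset:
  assumes "subgroup H G" "subgroup K G" "H \<subset> K"
  shows "p * card H \<le> card K"
proof -
  obtain a b where a: "card H = p ^ a" and b: "card K = p ^ b"
    using card_subgroup assms(1,2) by meson
  have "card H < card K"
    using assms(2,3) finite_carrier subgroup.subset by (metis finite_subset psubset_card_mono)
  then have "a < b"
    using a b one_less_p by (simp add: power_strict_increasing_iff)
  then show ?thesis
    using a b one_less_p by (metis Suc_leI power_Suc power_increasing less_imp_le)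
qed

lemma p_le_card_of_nontrivial:
  assumes "subgroup K G" "K \<noteq> {\<one>}"
  shows "p \<le> card K"
  using p_mult_card_le_of_psubset[OF triv_subgroup assms(1)] assms subgroup.one_closed
  by fastforce

lemma exists_order_p:
  assumes "subgroup H G" "H \<noteq> {\<one>}"
  shows "\<exists>w \<in> H. w \<noteq> \<one> \<and> w [^] p = \<one>"
proof -
  obtain z where z: "z \<in> H" "z \<noteq> \<one>"
    using assms subgroup.one_closed by blast
  have zG: "z \<in> carrier G"
    using subgroup.mem_carrier[OF assms(1) z(1)] .
  have "ord z dvd p ^ n"
    using ord_dvd_group_order[OF zG] order_eq by simp
  then obtain k where k: "ord z = p ^ k"
    using divides_primepow_nat[OF prime] by auto
  have "k \<noteq> 0"
    using k ord_eq_1[OF zG] z(2) by auto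
  then obtain i where i: "k = Suc i"
    using not0_implies_Suc by blast
  let ?w = "z [^] (p ^ i)"
  have "?w [^] p = z [^] ord z"
    using zG by (simp add: nat_pow_pow k i mult.commute)
  then have "?w [^] p = \<one>"
    using zG by simp
  moreover have "?w \<noteq> \<one>"
  proof
    assume "?w = \<one>"
    then have "p ^ Suc i dvd p ^ i"
      using pow_eq_id[OF zG] k i by simp
    then show False
      using power_dvd_imp_le one_less_p by fastforce
  qed
  moreover have "?w \<in> H"
    using subgroup_nat_pow_closed[OF assms(1) z(1)] .
  ultimately show ?thesis
    by blast
qed

lemma pow_eq_one_of_not_cyclic:
  assumes "\<And>x. x \<in> carrier G \<Longrightarrow> generate G {x} \<noteq> carrier G" "x \<in> carrier G"
  shows "x [^] (p ^ (n - 1)) = \<one>"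
proof -
  have "ord x dvd p ^ n"
    using ord_dvd_group_order[OF assms(2)] order_eq by simp
  then obtain i where i: "i \<le> n" "ord x = p ^ i"
    using divides_primepow_nat[OF prime] by auto
  have "i \<noteq> n"
  proof
    assume "i = n"
    then have "card (generate G {x}) = card (carrier G)"
      using i generate_pow_card[OF assms(2)] order_eq by (simp add: order_def)
    moreover have "generate G {x} \<subseteq> carrier G"
      using assms(2) by (intro generate_incl) simp
    ultimately show False
      using assms(1)[OF assms(2)] finite_carrier card_subset_eq by blast
  qed
  then have "ord x dvd p ^ (n - 1)"
    using i by (simp add: le_imp_power_dvd)
  then show ?thesis
    using pow_eq_id[OF assms(2)] by blast
qed

lemma two_le_exponent_of_not_cyclic:
  assumes "\<And>x. x \<in> carrier G \<Longrightarrow> generate G {x} \<noteq> carrier G"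
  shows "2 \<le> n"
proof (rule ccontr)
  assume "\<not> 2 \<le> n"
  then have "x = \<one>" if "x \<in> carrier G" for x
    using pow_eq_one_of_not_cyclic[OF assms that] that by simp
  then have "carrier G = {\<one>}"
    by auto
  moreover have "\<one> \<in> generate G {\<one>}"
    by (rule generate.one)
  moreover have "generate G {\<one>} \<subseteq> carrier G"
    by (rule generate_incl) simp
  ultimately show False
    using assms[of \<one>] by auto
qed

lemma upper_central_psubset:
  assumes "upper_central G j \<noteq> carrier G"
  shows "upper_central G j \<subset> upper_central G (Suc j)"
proof -
  let ?N = "upper_central G j"
  interpret N: normal ?N G by (rule upper_central_normal)
  obtain m where Q: "p_group (G Mod ?N) p m" and card: "p ^ m * card ?N = p ^ n"
    using p_group_FactGroup[OF upper_central_normal] by blast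
  have "m \<noteq> 0"
  proof
    assume "m = 0"
    then have "card ?N = card (carrier G)"
      using card order_eq by (simp add: order_def)
    then show False
      using assms upper_central_subset finite_carrier by (metis card_subset_eq)
  qed
  then obtain Z where Z: "Z \<in> center (G Mod ?N)" "Z \<noteq> ?N"
    using p_group.center_nontrivial[OF Q] by auto
  then obtain x where x: "x \<in> carrier G" "Z = ?N #> x"
    unfolding center_def carrier_FactGroup by auto
  have "x \<notin> ?N"
    using Z x coset_join2[OF x(1) N.subgroup_axioms] by auto
  moreover have "x \<in> upper_central G (Suc j)"
    using Z x upper_central_Suc_iff_central_coset[OF x(1)]
    unfolding center_def carrier_FactGroup by auto
  ultimately show ?thesis
    using upper_central_mono[of j "Suc j"] by auto
qed

lemma upper_central_eventually_carrier: "\<exists>k. upper_central G k = carrier G"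
proof (rule ccontr)
  assume "\<not> ?thesis"
  then have "upper_central G k \<subset> upper_central G (Suc k)" for k
    using upper_central_psubset by blast
  then have "k \<le> card (upper_central G k)" for k
  proof (induction k)
    case (Suc k)
    then show ?case
      using finite_carrier upper_central_subset
      by (metis Suc_le_eq finite_subset le_less_trans psubset_card_mono)
  qed simp
  from this[of "Suc (card (carrier G))"] show False
    using card_mono[OF finite_carrier upper_central_subset, of "Suc (card (carrier G))"] by linarith
qed

lemma lower_central_nilpotency_class: "lower_central G (nilpotency_class G) = {\<one>}"
proof -
  obtain k where k: "upper_central G k = carrier G"
    using upper_central_eventually_carrier by blast
  have "lower_central G k = {\<one>}"
    using lower_central_subset_upper_central_diff[OF k, of k] subgroup.one_closed[OF lower_central_subgroup]
    by auto
  then show ?thesis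
    unfolding nilpotency_class_def by (rule LeastI)
qed

lemma upper_central_nilpotency_class: "upper_central G (nilpotency_class G) = carrier G"
  using lower_central_diff_subset_upper_central[OF lower_central_nilpotency_class,
      of "nilpotency_class G"] upper_central_subset by auto

lemma p_pow_mult_card_upper_central_le:
  assumes "j + i \<le> nilpotency_class G"
  shows "p ^ i * card (upper_central G j) \<le> card (upper_central G (j + i))"
  using assms
proof (induction i)
  case (Suc i)
  have "p ^ Suc i * card (upper_central G j) \<le> p * card (upper_central G (j + i))"
    using Suc by simp
  also have "\<dots> \<le> card (upper_central G (Suc (j + i)))"
    using Suc.prems upper_central_ne_carrier[of "j + i"]
    by (intro p_mult_card_le_of_psubset upper_central_subgroup upper_central_psubset) simp
  finally show ?case
    by simp
qed simp

lemma card_upper_central_exponent_le: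
  assumes "j + i \<le> nilpotency_class G"
    and "card (upper_central G j) = p ^ a" "card (upper_central G (j + i)) = p ^ b"
  shows "i + a \<le> b"
  using p_pow_mult_card_upper_central_le[OF assms(1)] assms(2,3) one_less_p
  by (simp flip: power_add)

text \<open>\<open>Z(G) \<inter> G'\<close> is a proper subgroup of \<open>Z(G)\<close>, and it is nontrivial because it
  contains the last nontrivial term of the lower central series.\<close>

lemma p_square_le_card_center:
  assumes "\<not> center G \<subseteq> commutator_subgroup G" "2 \<le> nilpotency_class G"
  shows "p ^ 2 \<le> card (center G)"
proof -
  let ?H = "center G \<inter> commutator_subgroup G"
  let ?L = "lower_central G (nilpotency_class G - 1)"
  have "subgroup (commutator_subgroup G) G"
    using lower_central_subgroup[of 1] unfolding lower_central_one .
  then have H: "subgroup ?H G"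
    using center_subgroup by (rule subgroups_Inter_pair[rotated])
  have "?L \<subseteq> center G"
    using lower_central_diff_subset_upper_central[OF lower_central_nilpotency_class, of 1]
      assms(2) unfolding upper_central_one by simp
  moreover have "?L \<subseteq> commutator_subgroup G"
    using lower_central_Suc_subset_commutator_subgroup[of "nilpotency_class G - 2"] assms(2)
    by (simp add: Suc_diff_Suc numeral_2_eq_2)
  ultimately have "?L \<subseteq> ?H"
    by blast
  then have "?H \<noteq> {\<one>}"
    using lower_central_pred_nilpotency_class assms(2) subgroup.one_closed[OF lower_central_subgroup]
    by fastforce
  then have "p * p \<le> p * card ?H"
    using p_le_card_of_nontrivial[OF H] by simp
  also have "\<dots> \<le> card (center G)"
    using assms(1) by (intro p_mult_card_le_of_psubset H center_subgroup) auto
  finally show ?thesis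
    by (simp add: power2_eq_square)
qed

lemma FactGroup_pred_nilpotency_class:
  assumes "2 \<le> nilpotency_class G"
  obtains m where "p_group (G Mod upper_central G (nilpotency_class G - 1)) p m" "2 \<le> m"
    and "p ^ m * card (upper_central G (nilpotency_class G - 1)) = p ^ n"
    and "\<And>U. U \<in> carrier (G Mod upper_central G (nilpotency_class G - 1)) \<Longrightarrow>
      U [^]\<^bsub>G Mod upper_central G (nilpotency_class G - 1)\<^esub> (p ^ (m - 1)) =
      \<one>\<^bsub>G Mod upper_central G (nilpotency_class G - 1)\<^esub>"
proof -
  obtain m where Q: "p_group (G Mod upper_central G (nilpotency_class G - 1)) p m"
    and card: "p ^ m * card (upper_central G (nilpotency_class G - 1)) = p ^ n"
    using p_group_FactGroup[OF upper_central_normal] by blast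
  note not_cyclic = FactGroup_pred_nilpotency_class_not_cyclic[OF finite_carrier assms]
  show thesis
    using that[OF Q _ card] p_group.two_le_exponent_of_not_cyclic[OF Q not_cyclic]
      p_group.pow_eq_one_of_not_cyclic[OF Q not_cyclic] by blast
qed

lemma comm_group_FactGroup_pred_nilpotency_class:
  assumes "0 < nilpotency_class G"
  shows "comm_group (G Mod upper_central G (nilpotency_class G - 1))"
  using upper_central_Suc_eq_carrier_iff[of "nilpotency_class G - 1"] upper_central_nilpotency_class assms
  by simp

lemma card_upper_central_pred_nilpotency_class:
  assumes "\<not> center G \<subseteq> commutator_subgroup G" "2 \<le> nilpotency_class G"
    and "n = nilpotency_class G + 2"
  shows "card (upper_central G (nilpotency_class G - 1)) = p ^ nilpotency_class G"
proof -
  let ?c = "nilpotency_class G"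
  obtain m where "2 \<le> m" and card: "p ^ m * card (upper_central G (?c - 1)) = p ^ n"
    by (rule FactGroup_pred_nilpotency_class[OF assms(2)]) blast
  obtain e where e: "card (upper_central G (?c - 1)) = p ^ e"
    using card_subgroup[OF upper_central_subgroup] by blast
  obtain a where a: "card (center G) = p ^ a"
    using card_subgroup[OF center_subgroup] by blast
  have "1 + (?c - 2) = ?c - 1"
    using assms(2) by simp
  then have "?c - 2 + a \<le> e"
    using card_upper_central_exponent_le[of 1 "?c - 2" a e] a e assms(2)
    unfolding upper_central_one by simp
  moreover have "2 \<le> a"
    using p_square_le_card_center[OF assms(1,2)] a one_less_p by simp
  moreover have "p ^ (m + e) = p ^ n"
    using card e by (simp add: power_add)
  then have "m + e = ?c + 2"
    using power_inject_exp[OF one_less_p] assms(3) by blast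
  ultimately have "e = ?c"
    using \<open>2 \<le> m\<close> assms(2) by linarith
  then show ?thesis
    using e by simp
qed

lemma coclass_two_card_estimates:
  assumes "\<not> center G \<subseteq> commutator_subgroup G" "3 \<le> nilpotency_class G"
    and "n = nilpotency_class G + 2"
  shows "p_group (G Mod upper_central G (nilpotency_class G - 1)) p 2"
    and "\<And>U. U \<in> carrier (G Mod upper_central G (nilpotency_class G - 1)) \<Longrightarrow>
      U [^]\<^bsub>G Mod upper_central G (nilpotency_class G - 1)\<^esub> p =
      \<one>\<^bsub>G Mod upper_central G (nilpotency_class G - 1)\<^esub>"
    and "card (upper_central G 2) \<le> p * card (center G)"
proof -
  let ?c = "nilpotency_class G"
  let ?Q = "G Mod upper_central G (?c - 1)"
  have c: "2 \<le> ?c"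
    using assms(2) by simp
  obtain m where Q: "p_group ?Q p m"
    and card: "p ^ m * card (upper_central G (?c - 1)) = p ^ n"
    and exp: "\<And>U. U \<in> carrier ?Q \<Longrightarrow> U [^]\<^bsub>?Q\<^esub> (p ^ (m - 1)) = \<one>\<^bsub>?Q\<^esub>"
    by (rule FactGroup_pred_nilpotency_class[OF c]) blast
  have "p ^ (m + ?c) = p ^ (2 + ?c)"
    using card card_upper_central_pred_nilpotency_class[OF assms(1) c assms(3)] assms(3)
    by (simp add: power_add)
  then have "m + ?c = 2 + ?c"
    using power_inject_exp[OF one_less_p] by blast
  then have "m = 2"
    by simp
  then show "p_group ?Q p 2" "\<And>U. U \<in> carrier ?Q \<Longrightarrow> U [^]\<^bsub>?Q\<^esub> p = \<one>\<^bsub>?Q\<^esub>"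
    using Q exp by simp_all
  obtain a where a: "card (center G) = p ^ a"
    using card_subgroup[OF center_subgroup] by blast
  obtain b where b: "card (upper_central G 2) = p ^ b"
    using card_subgroup[OF upper_central_subgroup] by blast
  have "2 + (?c - 3) = ?c - 1"
    using assms(2) by simp
  then have "?c - 3 + b \<le> ?c"
    using card_upper_central_exponent_le[of 2 "?c - 3" b ?c] b assms(2)
      card_upper_central_pred_nilpotency_class[OF assms(1) c assms(3)] by simp
  moreover have "2 \<le> a"
    using p_square_le_card_center[OF assms(1) c] a one_less_p by simp
  ultimately have "p ^ b \<le> p ^ Suc a"
    using assms(2) one_less_p by (simp only: power_increasing_iff)
  then show "card (upper_central G 2) \<le> p * card (center G)"
    using a b by simp
qed

end

section \<open>The centre of the inner automorphism group\<close>

lemma card_image_mult_le_card: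
  assumes "finite S" "\<And>s. s \<in> S \<Longrightarrow> k \<le> card {t \<in> S. f t = f s}"
  shows "card (f ` S) * k \<le> card S"
proof -
  have "card (f ` S) * k \<le> (\<Sum>y \<in> f ` S. card {t \<in> S. f t = y})"
    using sum_bounded_below[of "f ` S" k "\<lambda>y. card {t \<in> S. f t = y}"] assms(2) by auto
  also have "\<dots> = card S"
    using sum.image_gen[OF assms(1), of "\<lambda>_. 1::nat" f] by simp
  finally show ?thesis .
qed

context group begin

lemma conj_eq_conj_iff_commute:
  assumes "a \<in> carrier G" "b \<in> carrier G" "x \<in> carrier G"
  shows "a \<otimes> x \<otimes> inv a = b \<otimes> x \<otimes> inv b \<longleftrightarrow> (inv b \<otimes> a) \<otimes> x = x \<otimes> (inv b \<otimes> a)"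
proof
  assume h: "a \<otimes> x \<otimes> inv a = b \<otimes> x \<otimes> inv b"
  have "(inv b \<otimes> a) \<otimes> x = inv b \<otimes> (a \<otimes> x \<otimes> inv a) \<otimes> a"
    using assms by (simp add: m_assoc)
  also have "\<dots> = inv b \<otimes> (b \<otimes> x \<otimes> inv b) \<otimes> a"
    by (simp only: h)
  also have "\<dots> = x \<otimes> (inv b \<otimes> a)"
    using assms by (simp add: m_assoc)
  finally show "(inv b \<otimes> a) \<otimes> x = x \<otimes> (inv b \<otimes> a)" .
next
  assume h: "(inv b \<otimes> a) \<otimes> x = x \<otimes> (inv b \<otimes> a)"
  have "a \<otimes> x \<otimes> inv a = b \<otimes> ((inv b \<otimes> a) \<otimes> x) \<otimes> inv a"
    using assms by (simp add: m_assoc)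
  also have "\<dots> = b \<otimes> (x \<otimes> (inv b \<otimes> a)) \<otimes> inv a"
    by (simp only: h)
  also have "\<dots> = b \<otimes> x \<otimes> inv b"
    using assms by (simp add: m_assoc)
  finally show "a \<otimes> x \<otimes> inv a = b \<otimes> x \<otimes> inv b" .
qed

lemma inner_aut_eq_iff:
  assumes "a \<in> carrier G" "b \<in> carrier G"
  shows "inner_aut G a = inner_aut G b \<longleftrightarrow> inv b \<otimes> a \<in> center G"
proof -
  have "inner_aut G a = inner_aut G b \<longleftrightarrow> (\<forall>x \<in> carrier G. a \<otimes> x \<otimes> inv a = b \<otimes> x \<otimes> inv b)"
  proof
    show "\<forall>x \<in> carrier G. a \<otimes> x \<otimes> inv a = b \<otimes> x \<otimes> inv b" if "inner_aut G a = inner_aut G b"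
    proof
      fix x assume "x \<in> carrier G"
      then show "a \<otimes> x \<otimes> inv a = b \<otimes> x \<otimes> inv b"
        using fun_cong[OF that, of x] by (simp add: inner_aut_def)
    qed
    show "inner_aut G a = inner_aut G b" if "\<forall>x \<in> carrier G. a \<otimes> x \<otimes> inv a = b \<otimes> x \<otimes> inv b"
      using that unfolding inner_aut_def by (intro restrict_ext) simp
  qed
  also have "\<dots> \<longleftrightarrow> inv b \<otimes> a \<in> center G"
    using assms conj_eq_conj_iff_commute unfolding center_def by auto
  finally show ?thesis .
qed

lemma inner_aut_mult:
  assumes "g \<in> carrier G" "h \<in> carrier G"
  shows "inner_aut G (g \<otimes> h) = inner_aut G g \<otimes>\<^bsub>BijGroup (carrier G)\<^esub> inner_aut G h"
proof -
  have eq: "inner_aut G = (\<lambda>g. \<lambda>h \<in> carrier G. g \<otimes> h \<otimes> inv g)"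
    unfolding inner_aut_def by (rule ext) simp
  show ?thesis
    unfolding eq by (rule hom_mult[OF conjugation_is_hom assms])
qed

lemma center_InnGroup_subset: "center (InnGroup G) \<subseteq> inner_aut G ` upper_central G 2"
proof
  fix \<sigma> assume \<sigma>: "\<sigma> \<in> center (InnGroup G)"
  have carrier_Inn: "carrier (InnGroup G) = inner_aut G ` carrier G"
    by (simp add: InnGroup_def Inn_def)
  have mult_Inn: "\<tau> \<otimes>\<^bsub>InnGroup G\<^esub> \<rho> = \<tau> \<otimes>\<^bsub>BijGroup (carrier G)\<^esub> \<rho>" for \<tau> \<rho>
    by (simp add: InnGroup_def AutoGroup_def)
  obtain g where g: "g \<in> carrier G" "\<sigma> = inner_aut G g"
    using \<sigma> unfolding center_def carrier_Inn by blast
  have "h \<otimes> g \<otimes> inv h \<otimes> inv g \<in> center G" if h: "h \<in> carrier G" for h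
  proof -
    have "inner_aut G (g \<otimes> inv h) = \<sigma> \<otimes>\<^bsub>InnGroup G\<^esub> inner_aut G (inv h)"
      using g h by (simp add: inner_aut_mult mult_Inn)
    also have "\<dots> = inner_aut G (inv h) \<otimes>\<^bsub>InnGroup G\<^esub> \<sigma>"
      using \<sigma> h unfolding center_def carrier_Inn by simp
    also have "\<dots> = inner_aut G (inv h \<otimes> g)"
      using g h by (simp add: inner_aut_mult mult_Inn)
    finally have c: "inv g \<otimes> h \<otimes> g \<otimes> inv h \<in> center G"
      using g h inner_aut_eq_iff by (simp add: inv_mult_group m_assoc)
    then have "(inv g \<otimes> h \<otimes> g \<otimes> inv h) \<otimes> inv g = inv g \<otimes> (inv g \<otimes> h \<otimes> g \<otimes> inv h)"
      using g unfolding center_def by simp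
    then have "h \<otimes> g \<otimes> inv h \<otimes> inv g = inv g \<otimes> h \<otimes> g \<otimes> inv h"
      using g h by (simp add: m_assoc)
    with c show ?thesis
      by simp
  qed
  then have "g \<in> upper_central G (Suc 1)"
    using g unfolding upper_central.simps(2) upper_central_one by auto
  then show "\<sigma> \<in> inner_aut G ` upper_central G 2"
    using g by (simp add: numeral_2_eq_2)
qed

lemma card_inner_aut_image_le:
  assumes "finite (carrier G)"
  shows "card (inner_aut G ` upper_central G 2) * card (center G) \<le> card (upper_central G 2)"
proof (rule card_image_mult_le_card)
  show finite: "finite (upper_central G 2)"
    using assms upper_central_subset finite_subset by blast
  fix g assume g: "g \<in> upper_central G 2"
  have gG: "g \<in> carrier G"
    using g upper_central_subset by blast
  let ?F = "{t \<in> upper_central G 2. inner_aut G t = inner_aut G g}"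
  have center_subset: "center G \<subseteq> upper_central G 2"
    using upper_central_mono[of 1 2] unfolding upper_central_one by simp
  have image_subset: "(\<otimes>) g ` center G \<subseteq> ?F"
  proof
    fix t assume "t \<in> (\<otimes>) g ` center G"
    then obtain z where z: "z \<in> center G" "t = g \<otimes> z"
      by blast
    have zG: "z \<in> carrier G"
      using z(1) unfolding center_def by simp
    have "t \<in> upper_central G 2"
      using g z center_subset subgroup.m_closed[OF upper_central_subgroup] by auto
    moreover have "inner_aut G t = inner_aut G g"
      using inner_aut_eq_iff[of t g] z gG zG by simp
    ultimately show "t \<in> ?F"
      by simp
  qed
  have "inj_on ((\<otimes>) g) (center G)"
    using gG unfolding center_def by (intro inj_onI) simp
  then have "card (center G) = card ((\<otimes>) g ` center G)"
    by (simp add: card_image)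
  also have "\<dots> \<le> card ?F"
    using finite image_subset by (intro card_mono) simp_all
  finally show "card (center G) \<le> card ?F" .
qed

end

context p_group begin

lemma card_center_InnGroup_le:
  assumes "card (upper_central G 2) \<le> p * card (center G)"
  shows "finite (center (InnGroup G))" and "card (center (InnGroup G)) \<le> p"
proof -
  have finite_image: "finite (inner_aut G ` upper_central G 2)"
    using finite_carrier upper_central_subset finite_subset by blast
  then show "finite (center (InnGroup G))"
    using center_InnGroup_subset finite_subset by blast
  have "\<one> \<in> center G" "finite (center G)"
    using subgroup.one_closed[OF center_subgroup] subgroup.subset[OF center_subgroup]
      finite_carrier finite_subset by blast+
  then have "0 < card (center G)"
    using card_gt_0_iff by blast
  moreover have "card (inner_aut G ` upper_central G 2) * card (center G) \<le> p * card (center G)"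
    using card_inner_aut_image_le[OF finite_carrier] assms by linarith
  ultimately have "card (inner_aut G ` upper_central G 2) \<le> p"
    by simp
  then show "card (center (InnGroup G)) \<le> p"
    using card_mono[OF finite_image center_InnGroup_subset] by linarith
qed

end

section \<open>Central automorphisms fixing the centre\<close>

context group begin

text \<open>If \<open>x \<phi>(x) = y \<phi>(y)\<close> then \<open>y\<inverse>x\<close> is central, hence killed by \<open>\<phi>\<close>, so \<open>\<phi>(x) = \<phi>(y)\<close>.\<close>

lemma inj_on_mult_central_hom:
  assumes hom: "\<phi> \<in> hom G G"
    and central: "\<And>x. x \<in> carrier G \<Longrightarrow> \<phi> x \<in> center G"
    and kills_center: "\<And>z. z \<in> center G \<Longrightarrow> \<phi> z = \<one>"
  shows "inj_on (\<lambda>x. x \<otimes> \<phi> x) (carrier G)"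
proof (rule inj_onI)
  fix x y assume x: "x \<in> carrier G" and y: "y \<in> carrier G" and eq: "x \<otimes> \<phi> x = y \<otimes> \<phi> y"
  have \<phi>G: "\<phi> x \<in> carrier G" "\<phi> y \<in> carrier G"
    using hom_in_carrier[OF hom] x y by auto
  have "inv y \<otimes> x = inv y \<otimes> (x \<otimes> \<phi> x) \<otimes> inv (\<phi> x)"
    using x y \<phi>G by (simp add: m_assoc)
  also have "\<dots> = \<phi> y \<otimes> inv (\<phi> x)"
    using eq x y \<phi>G by (simp add: m_assoc)
  finally have c: "inv y \<otimes> x \<in> center G"
    using center_subgroup central x y
    by (simp add: subgroup.m_closed subgroup.m_inv_closed)
  have "\<phi> x = \<phi> (y \<otimes> (inv y \<otimes> x))"
    using x y by (simp add: m_assoc [symmetric])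
  also have "\<dots> = \<phi> y \<otimes> \<phi> (inv y \<otimes> x)"
    using x y by (intro hom_mult[OF hom]) simp_all
  also have "\<dots> = \<phi> y"
    using \<phi>G kills_center[OF c] by simp
  finally show "x = y"
    using eq x y \<phi>G by simp
qed

lemma central_aut_Z_of_central_hom:
  assumes fin: "finite (carrier G)" and hom: "\<phi> \<in> hom G G"
    and central: "\<And>x. x \<in> carrier G \<Longrightarrow> \<phi> x \<in> center G"
    and kills_center: "\<And>z. z \<in> center G \<Longrightarrow> \<phi> z = \<one>"
  shows "(\<lambda>x \<in> carrier G. x \<otimes> \<phi> x) \<in> central_aut_Z G"
proof -
  let ?\<alpha> = "\<lambda>x \<in> carrier G. x \<otimes> \<phi> x"
  have \<phi>G: "\<phi> x \<in> carrier G" if "x \<in> carrier G" for x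
    using hom_in_carrier[OF hom that] .
  have "(\<lambda>x. x \<otimes> \<phi> x) \<in> hom G G"
    by (rule hom_mult_central[OF _ hom central]) (auto intro: homI)
  then have \<alpha>_hom: "?\<alpha> \<in> hom G G"
    by (rule hom_restrict) simp
  have "inj_on ?\<alpha> (carrier G)"
    using inj_on_mult_central_hom[OF hom central kills_center] by (simp add: inj_on_def)
  moreover have "?\<alpha> ` carrier G \<subseteq> carrier G"
    using \<phi>G by auto
  ultimately have "bij_betw ?\<alpha> (carrier G) (carrier G)"
    using endo_inj_surj[OF fin] by (simp add: bij_betw_def)
  then have "?\<alpha> \<in> auto G"
    using \<alpha>_hom unfolding auto_def Bij_def by simp
  moreover have "inv x \<otimes> ?\<alpha> x \<in> center G" if "x \<in> carrier G" for x
    using that \<phi>G central by (simp add: m_assoc [symmetric])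
  moreover have "?\<alpha> z = z" if "z \<in> center G" for z
    using that kills_center unfolding center_def by simp
  ultimately show ?thesis
    unfolding central_aut_Z_def central_aut_def by blast
qed

lemma functional_pow_hom:
  assumes "N \<lhd> G" "\<xi> \<in> hom (G Mod N) (integer_mod_group p)" "w \<in> carrier G" "w [^] p = \<one>"
  shows "(\<lambda>x. w [^] \<xi> (N #> x)) \<in> hom G G"
proof -
  have "(\<lambda>i::int. w [^] i) \<circ> (\<xi> \<circ> (\<lambda>x. N #> x)) \<in> hom G G"
    using Group.hom_compose[OF normal.r_coset_hom_Mod[OF assms(1)] assms(2)]
      int_pow_hom_integer_mod_group[OF assms(3,4)] by (rule Group.hom_compose)
  then show ?thesis
    by (simp add: comp_def)
qed

lemma central_aut_Z_of_functionals:
  fixes s t :: nat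
  assumes fin: "finite (carrier G)" and N: "N \<lhd> G" "center G \<subseteq> N"
    and \<xi>: "\<xi> \<in> hom (G Mod N) (integer_mod_group p)" and \<eta>: "\<eta> \<in> hom (G Mod N) (integer_mod_group p)"
    and w: "w \<in> center G" "w [^] p = \<one>"
  shows "(\<lambda>x \<in> carrier G. x \<otimes> ((w [^] s) [^] \<xi> (N #> x) \<otimes> (w [^] t) [^] \<eta> (N #> x)))
    \<in> central_aut_Z G"
proof (rule central_aut_Z_of_central_hom[OF fin])
  have wG: "w \<in> carrier G"
    using w(1) unfolding center_def by simp
  have pow_p: "(w [^] k) [^] p = \<one>" for k :: nat
  proof -
    have "(w [^] k) [^] p = (w [^] p) [^] k"
      using wG by (simp only: nat_pow_pow mult.commute)
    then show ?thesis
      using w(2) by simp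
  qed
  have central: "(w [^] k) [^] i \<in> center G" for k :: nat and i :: int
    using w(1) by (intro subgroup_int_pow_closed subgroup_nat_pow_closed center_subgroup)
  show "(\<lambda>x. (w [^] s) [^] \<xi> (N #> x) \<otimes> (w [^] t) [^] \<eta> (N #> x)) \<in> hom G G"
    by (intro hom_mult_central functional_pow_hom[OF N(1) \<xi> _ pow_p]
        functional_pow_hom[OF N(1) \<eta> _ pow_p] central nat_pow_closed wG)
  show "(w [^] s) [^] \<xi> (N #> x) \<otimes> (w [^] t) [^] \<eta> (N #> x) \<in> center G" if "x \<in> carrier G" for x
    using central center_subgroup by (simp add: subgroup.m_closed)
  show "(w [^] s) [^] \<xi> (N #> z) \<otimes> (w [^] t) [^] \<eta> (N #> z) = \<one>" if "z \<in> center G" for z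
  proof -
    interpret N: normal N G by (rule N(1))
    have "N #> z = \<one>\<^bsub>G Mod N\<^esub>"
      using N.rcos_const[OF is_group, of z] that N(2) by auto
    moreover have "\<xi> (\<one>\<^bsub>G Mod N\<^esub>) = 0" "\<eta> (\<one>\<^bsub>G Mod N\<^esub>) = 0"
      using hom_one[OF \<xi> N.factorgroup_is_group] hom_one[OF \<eta> N.factorgroup_is_group] by simp_all
    ultimately show ?thesis
      using wG by simp
  qed
qed

end

context comm_group begin

lemma pow_mult_pow_mult_mod:
  assumes a: "a \<in> carrier G" and b: "b \<in> carrier G" and "a [^] p = \<one>" "b [^] p = \<one>"
  shows "(a [^] i \<otimes> b [^] j) \<otimes> (a [^] k \<otimes> b [^] l) =
    a [^] ((i + k) mod p) \<otimes> b [^] ((j + l) mod (p::nat))"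
proof -
  have "(a [^] i \<otimes> b [^] j) \<otimes> (a [^] k \<otimes> b [^] l) = (a [^] i \<otimes> a [^] k) \<otimes> (b [^] j \<otimes> b [^] l)"
    using a b by (simp add: m_ac)
  also have "\<dots> = a [^] (i + k) \<otimes> b [^] (j + l)"
    using a b by (simp add: nat_pow_mult)
  finally show ?thesis
    using assms by (simp add: nat_pow_mod_eq)
qed

lemma exists_basis_of_order_p_square:
  assumes prime: "Factorial_Ring.prime p" and fin: "finite (carrier G)"
    and order: "order G = p ^ 2" and exp: "\<And>x. x \<in> carrier G \<Longrightarrow> x [^] p = \<one>"
  obtains a b where "a \<in> carrier G" "b \<in> carrier G"
    "bij_betw (\<lambda>(i, j). a [^] i \<otimes> b [^] j) ({..<p} \<times> {..<p}) (carrier G)"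
proof -
  have p: "1 < p"
    using prime prime_gt_1_nat by blast
  have "1 < order G"
    using order one_less_power[OF p, of 2] by simp
  then have "carrier G \<noteq> {\<one>}"
    by (auto simp: order_def)
  then obtain a where a: "a \<in> carrier G" "a \<noteq> \<one>"
    by blast
  have ord_a: "ord a = p"
    using ord_eq_prime[OF prime a exp[OF a(1)]] .
  have "card (generate G {a}) < card (carrier G)"
    using generate_pow_card[OF a(1)] ord_a order p by (simp add: order_def power2_eq_square)
  then have "generate G {a} \<noteq> carrier G"
    by auto
  moreover have "generate G {a} \<subseteq> carrier G"
    using a(1) by (intro generate_incl) simp
  ultimately obtain b where b: "b \<in> carrier G" "b \<notin> generate G {a}"
    by blast
  have "b \<noteq> \<one>"
    using b(2) generate.one by blast
  then have ord_b: "ord b = p"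
    using ord_eq_prime[OF prime b(1) _ exp[OF b(1)]] by simp
  let ?f = "\<lambda>(i, j). a [^] i \<otimes> b [^] j"
  have "generate G {a} \<inter> generate G {b} \<subseteq> {\<one>}"
    using generate_Int_generate_eq_one[OF fin _ a(1) b] ord_b prime by simp
  then have "inj_on ?f ({..<p} \<times> {..<p})"
    using inj_on_pow_mult_pow[OF a(1) b(1)] ord_a ord_b by simp
  moreover have "?f ` ({..<p} \<times> {..<p}) \<subseteq> carrier G"
    using a b by auto
  moreover have "card ({..<p} \<times> {..<p}) = card (carrier G)"
    using order by (simp add: order_def power2_eq_square)
  ultimately have "bij_betw ?f ({..<p} \<times> {..<p}) (carrier G)"
    using fin by (simp add: bij_betw_def card_image card_subset_eq)
  then show thesis
    using that a(1) b(1) by blast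
qed

lemma exists_dual_basis:
  assumes prime: "Factorial_Ring.prime p" and fin: "finite (carrier G)"
    and order: "order G = p ^ 2" and exp: "\<And>x. x \<in> carrier G \<Longrightarrow> x [^] p = \<one>"
  obtains a b \<xi> \<eta> where "a \<in> carrier G" "b \<in> carrier G"
    and "\<xi> \<in> hom G (integer_mod_group p)" "\<eta> \<in> hom G (integer_mod_group p)"
    and "\<xi> a = 1" "\<xi> b = 0" "\<eta> a = 0" "\<eta> b = 1"
proof -
  have p: "1 < p"
    using prime prime_gt_1_nat by blast
  obtain a b where a: "a \<in> carrier G" and b: "b \<in> carrier G"
    and bij: "bij_betw (\<lambda>(i, j). a [^] i \<otimes> b [^] j) ({..<p} \<times> {..<p}) (carrier G)"
    using exists_basis_of_order_p_square[OF assms] by blast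
  define f where "f = (\<lambda>(i::nat, j::nat). a [^] i \<otimes> b [^] j)"
  define coord where "coord = the_inv_into ({..<p} \<times> {..<p}) f"
  have coord: "coord V \<in> {..<p} \<times> {..<p}" "f (coord V) = V" if "V \<in> carrier G" for V
    using that bij_betw_the_inv_into[OF bij[folded f_def]] f_the_inv_into_f_bij_betw[OF bij[folded f_def]]
    unfolding coord_def bij_betw_def by auto
  have coord_f: "coord (f (i, j)) = (i, j)" if "i < p" "j < p" for i j
    using that the_inv_into_f_f[OF bij_betw_imp_inj_on[OF bij[folded f_def]]] unfolding coord_def by simp
  have f_mult: "f (i, j) \<otimes> f (k, l) = f ((i + k) mod p, (j + l) mod p)" for i j k l
    unfolding f_def using pow_mult_pow_mult_mod[OF a b exp[OF a] exp[OF b]] by simp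
  have coord_mult: "coord (V \<otimes> W) =
      ((fst (coord V) + fst (coord W)) mod p, (snd (coord V) + snd (coord W)) mod p)"
    if "V \<in> carrier G" "W \<in> carrier G" for V W
    using f_mult[of "fst (coord V)" "snd (coord V)" "fst (coord W)" "snd (coord W)"]
      coord[OF that(1)] coord[OF that(2)] coord_f p by simp
  have coord_hom: "(\<lambda>V. int (sel (coord V))) \<in> hom G (integer_mod_group p)"
    if "sel = fst \<or> sel = snd" for sel :: "nat \<times> nat \<Rightarrow> nat"
    using that coord coord_mult p
    by (intro homI) (auto simp: carrier_integer_mod_group zmod_int mem_Times_iff)
  have "coord a = (1, 0)" "coord b = (0, 1)"
    using coord_f[of 1 0] coord_f[of 0 1] a b p by (simp_all add: f_def)
  then show thesis
    using that[OF a b coord_hom[of fst] coord_hom[of snd]] by simp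
qed

end

context p_group begin

lemma p_square_le_card_central_aut_Z:
  assumes N: "N \<lhd> G" "center G \<subseteq> N" and Q: "comm_group (G Mod N)" "order (G Mod N) = p ^ 2"
    and exp: "\<And>U. U \<in> carrier (G Mod N) \<Longrightarrow> U [^]\<^bsub>G Mod N\<^esub> p = \<one>\<^bsub>G Mod N\<^esub>"
    and nontrivial: "center G \<noteq> {\<one>}"
  shows "p ^ 2 \<le> card (central_aut_Z G)"
proof -
  have "finite (carrier (G Mod N))"
    using finite_carrier unfolding carrier_FactGroup by simp
  then obtain a b \<xi> \<eta> where ab: "a \<in> carrier (G Mod N)" "b \<in> carrier (G Mod N)"
    and \<xi>: "\<xi> \<in> hom (G Mod N) (integer_mod_group p)" "\<xi> a = 1" "\<xi> b = 0"
    and \<eta>: "\<eta> \<in> hom (G Mod N) (integer_mod_group p)" "\<eta> a = 0" "\<eta> b = 1"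
    by (rule comm_group.exists_dual_basis[OF Q(1) prime _ Q(2) exp]) blast
  obtain a0 b0 where a0: "a0 \<in> carrier G" "a = N #> a0" and b0: "b0 \<in> carrier G" "b = N #> b0"
    using ab unfolding carrier_FactGroup by blast
  obtain w where w: "w \<in> center G" "w \<noteq> \<one>" "w [^] p = \<one>"
    using exists_order_p[OF center_subgroup nontrivial] by blast
  have wG: "w \<in> carrier G"
    using w(1) unfolding center_def by simp
  then have pow_inj: "k = k'" if "w [^] k = w [^] k'" "k < p" "k' < p" for k k' :: nat
    using inj_onD[OF ord_inj[OF wG] that(1)] that(2,3) ord_eq_prime[OF prime wG w(2,3)] by simp
  define \<alpha> where "\<alpha> s t = (\<lambda>x \<in> carrier G. x \<otimes> ((w [^] s) [^] \<xi> (N #> x) \<otimes> (w [^] t) [^] \<eta> (N #> x)))"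
    for s t :: nat
  have \<alpha>: "\<alpha> s t \<in> central_aut_Z G" for s t
    unfolding \<alpha>_def using central_aut_Z_of_functionals[OF finite_carrier N \<xi>(1) \<eta>(1) w(1,3)] .
  have \<alpha>_a0: "\<alpha> s t a0 = a0 \<otimes> w [^] s" and \<alpha>_b0: "\<alpha> s t b0 = b0 \<otimes> w [^] t" for s t
    using a0 b0 \<xi> \<eta> wG by (simp_all add: \<alpha>_def)
  have "inj_on (\<lambda>(s, t). \<alpha> s t) ({..<p} \<times> {..<p})"
  proof (rule inj_onI, clarsimp)
    fix s t s' t' :: nat
    assume lt: "s < p" "t < p" "s' < p" "t' < p" and eq: "\<alpha> s t = \<alpha> s' t'"
    have "w [^] s = w [^] s'" "w [^] t = w [^] t'"
      using \<alpha>_a0[of s t] \<alpha>_a0[of s' t'] \<alpha>_b0[of s t] \<alpha>_b0[of s' t'] eq a0 b0 wG by simp_all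
    then show "s = s' \<and> t = t'"
      using pow_inj lt by blast
  qed
  then have "p ^ 2 = card ((\<lambda>(s, t). \<alpha> s t) ` ({..<p} \<times> {..<p}))"
    by (simp add: card_image power2_eq_square)
  also have "\<dots> \<le> card (central_aut_Z G)"
    using \<alpha> by (intro card_mono finite_central_aut_Z finite_carrier) auto
  finally show ?thesis .
qed

end

theorem lemma2p2:
  fixes G :: "('a, 'b) monoid_scheme" and p n :: nat
  assumes "Factorial_Ring.prime p"
    and "group G"
    and "finite (carrier G)"
    and "order G = p ^ n"
    and "\<not> center G \<subseteq> commutator_subgroup G"
    and "nilpotency_class G \<ge> 3"
    and "n = nilpotency_class G + 2"
  shows "\<not> (central_aut_Z G = center (InnGroup G) \<and> central_aut_Z G \<subset> central_aut G)"
proof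
  assume h: "central_aut_Z G = center (InnGroup G) \<and> central_aut_Z G \<subset> central_aut G"
  interpret p_group G p n
    using assms(1-4) by (simp add: p_group_def p_group_axioms_def)
  let ?N = "upper_central G (nilpotency_class G - 1)"
  note estimates = coclass_two_card_estimates[OF assms(5-7)]
  have "p ^ 2 \<le> card (central_aut_Z G)"
  proof (rule p_square_le_card_central_aut_Z[OF upper_central_normal])
    show "center G \<subseteq> ?N" "comm_group (G Mod ?N)"
      using center_subset_upper_central comm_group_FactGroup_pred_nilpotency_class assms(6) by simp_all
    show "order (G Mod ?N) = p ^ 2"
      using p_group.order_eq[OF estimates(1)] .
    show "center G \<noteq> {\<one>\<^bsub>G\<^esub>}"
      using center_nontrivial assms(7) by auto
  qed (use estimates(2) in simp)
  also have "\<dots> \<le> p"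
    using card_center_InnGroup_le[OF estimates(3)] h by simp
  finally show False
    using one_less_p power_increasing_iff[of p 2 1] by simp
qed

end
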